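(* For all $a,b\in\mathbb{C}$, the following identity of formal power series in $x$ holds: $$M(1;a;b;x)=\exp\bigl(M(0;a;b;x)\bigr).$$
   Context: For $m,a,b\in\mathbb{C}$ the master series is the formal power series $M(m;a;b;x)=m+x+\sum_{\ell\ge 2}\frac{x^\ell}{\ell!}\prod_{\gamma=1}^{\ell-1}(m-a\gamma+b\ell)$. Since $M(0;a;b;x)$ has zero constant term, its exponential is a well-defined formal power series. *)

theory Defs
  imports Complex_Main "HOL-Computational_Algebra.Formal_Power_Series"
begin

definition master_series :: "complex \<Rightarrow> complex \<Rightarrow> complex \<Rightarrow> complex fps" where
  "master_series m a b = Abs_fps (\<lambda>l.
     if l = 0 then m
     else if l = 1 then 1
     else (\<Prod>\<gamma>=1..l-1. m - a * of_nat \<gamma> + b * of_nat l) / of_nat (fact l))"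

end

theory Submission
  imports Defs
begin

text \<open>
  Let \<open>\<psi>\<^sub>m(x) = (exp(m x) - 1)/m\<close>, with \<open>\<psi>\<^sub>0(x) = x\<close>, and let \<open>g\<close> be the compositional
  inverse of \<open>exp(-b x) \<psi>\<^sub>a(x)\<close>. Differentiating \<open>\<psi>\<^sub>a(g) = x exp(b g)\<close> gives
  \<open>g' exp(a g) = exp(b g) (1 + b x g')\<close>, and from this \<open>K\<^sub>m = \<psi>\<^sub>m(g)\<close> satisfies
  \<open>K\<^sub>m' = 1 + c K\<^sub>c + b x K\<^sub>c'\<close> with \<open>c = m + b - a\<close>. This determines the coefficient of
  \<open>x^(n+1)\<close> in \<open>K\<^sub>m\<close> from that of \<open>x^n\<close> in \<open>K\<^sub>c\<close>, for all \<open>m\<close> at once, and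
  \<open>M(m;a;b;x) - m\<close> obeys the same recursion; so \<open>M(m;a;b;x) = m + \<psi>\<^sub>m(g)\<close>. Hence
  \<open>M(0;a;b;x) = g\<close> and \<open>M(1;a;b;x) = 1 + (exp g - 1) = exp(M(0;a;b;x))\<close>.
\<close>

unbundle fps_syntax

definition fps_expm1_quot :: "'a::field_char_0 \<Rightarrow> 'a fps" where
  "fps_expm1_quot m = Abs_fps (\<lambda>k. if k = 0 then 0 else m ^ (k - 1) / fact k)"

lemma fps_deriv_expm1_quot: "fps_deriv (fps_expm1_quot m) = fps_exp m"
  by (rule fps_ext) (simp add: fps_expm1_quot_def field_simps del: of_nat_Suc)

lemma fps_const_mult_expm1_quot: "fps_const m * fps_expm1_quot m = fps_exp m - 1"
  by (rule fps_ext) (auto simp: fps_expm1_quot_def gr0_conv_Suc)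

lemma fps_expm1_quot_0: "fps_expm1_quot 0 = fps_X"
  by (rule fps_ext) (simp add: fps_expm1_quot_def fps_X_def)

lemma fps_expm1_quot_1: "fps_expm1_quot 1 = fps_exp 1 - 1"
  using fps_const_mult_expm1_quot[of 1] by simp

lemma fps_exp_compose_mult:
  assumes "g $ 0 = 0"
  shows "(fps_exp s oo g) * (fps_exp t oo g) = fps_exp (s + t) oo (g :: 'a::field_char_0 fps)"
  by (simp add: fps_exp_add_mult fps_compose_mult_distrib[OF assms])

definition master_coeff :: "complex \<Rightarrow> complex \<Rightarrow> complex \<Rightarrow> nat \<Rightarrow> complex" where
  "master_coeff a b m n =
     (if n = 0 then 0 else (\<Prod>\<gamma>=1..n-1. m - a * of_nat \<gamma> + b * of_nat n) / fact n)"

lemma master_series_eq_coeff: "master_series m a b = fps_const m + Abs_fps (master_coeff a b m)"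
  by (rule fps_ext) (auto simp: master_series_def master_coeff_def)

lemma master_coeff_Suc:
  "of_nat (Suc n) * master_coeff a b m (Suc n) =
     (if n = 0 then 1 else 0) + (m + b - a + b * of_nat n) * master_coeff a b (m + b - a) n"
proof (cases n)
  case 0
  then show ?thesis by (simp add: master_coeff_def)
next
  case (Suc k)
  define P where "P = (\<Prod>\<gamma>=1..k. m + b - a - a * of_nat \<gamma> + b * of_nat n)"
  have prod_Suc: "(\<Prod>\<gamma>=1..n. m - a * of_nat \<gamma> + b * of_nat (Suc n)) =
      (m + b - a + b * of_nat n) * P"
  proof -
    have "(\<Prod>\<gamma>=1..n. m - a * of_nat \<gamma> + b * of_nat (Suc n)) =
        (m - a + b * of_nat (Suc n)) * (\<Prod>\<gamma>=1..k. m - a * of_nat (Suc \<gamma>) + b * of_nat (Suc n))"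
      unfolding Suc
      by (subst prod.atLeast_Suc_atMost) (simp_all only: prod.shift_bounds_cl_Suc_ivl, simp)
    also have "\<dots> = (m + b - a + b * of_nat n) * P"
      by (simp add: P_def algebra_simps)
    finally show ?thesis .
  qed
  have "master_coeff a b m (Suc n) =
      (\<Prod>\<gamma>=1..n. m - a * of_nat \<gamma> + b * of_nat (Suc n)) / fact (Suc n)"
    by (simp add: master_coeff_def)
  then have "of_nat (Suc n) * master_coeff a b m (Suc n) =
      of_nat (Suc n) * ((m + b - a + b * of_nat n) * P) / fact (Suc n)"
    unfolding prod_Suc by simp
  also have "\<dots> = (m + b - a + b * of_nat n) * P / fact n"
    by (simp del: of_nat_Suc)
  also have "\<dots> = (m + b - a + b * of_nat n) * master_coeff a b (m + b - a) n"
    by (simp add: master_coeff_def P_def Suc)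
  finally show ?thesis
    using Suc by simp
qed

lemma master_series_unique:
  assumes K_0: "\<And>m. K m $ 0 = 0"
    and K_deriv: "\<And>m. fps_deriv (K m) = 1 + fps_const (m + b - a) * K (m + b - a)
                               + fps_const b * fps_X * fps_deriv (K (m + b - a))"
  shows "K m = master_series m a b - fps_const m"
proof -
  have K_Suc: "of_nat (Suc n) * K m $ Suc n =
      (if n = 0 then 1 else 0) + (m + b - a + b * of_nat n) * K (m + b - a) $ n" for m n
  proof -
    have "of_nat (Suc n) * K m $ Suc n = fps_deriv (K m) $ n"
      by (simp add: mult.commute)
    also have "\<dots> = (if n = 0 then 1 else 0) + (m + b - a + b * of_nat n) * K (m + b - a) $ n"
      unfolding K_deriv[of m] by (cases n) (simp_all add: K_0 algebra_simps)
    finally show ?thesis .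
  qed
  have "K m $ n = master_coeff a b m n" for n
  proof (induction n arbitrary: m)
    case 0
    then show ?case by (simp add: K_0 master_coeff_def)
  next
    case (Suc n)
    have "of_nat (Suc n) * K m $ Suc n = of_nat (Suc n) * master_coeff a b m (Suc n)"
      unfolding K_Suc master_coeff_Suc Suc.IH ..
    then show ?case
      by (simp del: of_nat_Suc)
  qed
  then show ?thesis
    by (simp add: master_series_eq_coeff fps_eq_iff)
qed

definition master_inverse :: "'a::field_char_0 \<Rightarrow> 'a \<Rightarrow> 'a fps" where
  "master_inverse a b = fps_inv (fps_exp (-b) * fps_expm1_quot a)"

lemma master_inverse_nth_0 [simp]: "master_inverse a b $ 0 = 0"
  by (simp add: master_inverse_def fps_inv_def)

lemma compose_master_inverse: "(fps_exp (-b) * fps_expm1_quot a) oo master_inverse a b = fps_X"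
  unfolding master_inverse_def
  by (rule fps_inv_right) (simp_all add: fps_expm1_quot_def fps_mult_nth numeral_2_eq_2)

lemma master_inverse_deriv:
  fixes a b :: "'a::field_char_0"
  defines "g \<equiv> master_inverse a b"
  shows "fps_deriv g * (fps_exp a oo g) =
    (fps_exp b oo g) * (1 + fps_const b * fps_X * fps_deriv g)"
proof -
  define h where "h = fps_exp (-b) * fps_expm1_quot a"
  have g_0: "g $ 0 = 0"
    by (simp add: g_def)
  have h_deriv: "fps_deriv h = fps_exp (a - b) - fps_const b * h"
    by (simp add: h_def fps_deriv_expm1_quot algebra_simps fps_exp_add_mult[symmetric]
        fps_const_neg[symmetric] del: fps_const_neg)
  have h_g: "h oo g = fps_X"
    by (simp add: h_def g_def compose_master_inverse)
  have "1 = fps_deriv (h oo g)"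
    by (simp add: h_g)
  also have "\<dots> = (fps_deriv h oo g) * fps_deriv g"
    by (rule fps_compose_deriv[OF g_0])
  also have "fps_deriv h oo g = (fps_exp (a - b) oo g) - fps_const b * fps_X"
    by (simp add: h_deriv fps_compose_sub_distrib fps_compose_mult_distrib[OF g_0] h_g)
  finally have "fps_exp b oo g =
      (fps_exp b oo g) * ((fps_exp (a - b) oo g) - fps_const b * fps_X) * fps_deriv g"
    by (simp add: mult.assoc)
  also have "(fps_exp b oo g) * ((fps_exp (a - b) oo g) - fps_const b * fps_X) =
      (fps_exp a oo g) - fps_const b * fps_X * (fps_exp b oo g)"
    unfolding right_diff_distrib fps_exp_compose_mult[OF g_0] by (simp add: algebra_simps)
  finally show ?thesis
    by (simp add: algebra_simps)
qed

lemma fps_deriv_expm1_quot_compose_master_inverse: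
  fixes a b m :: "'a::field_char_0"
  defines "K \<equiv> \<lambda>m. fps_expm1_quot m oo master_inverse a b"
  shows "fps_deriv (K m) = 1 + fps_const (m + b - a) * K (m + b - a)
                            + fps_const b * fps_X * fps_deriv (K (m + b - a))"
proof -
  define g where "g = master_inverse a b"
  define E where "E s = fps_exp s oo g" for s
  have K_g: "K s = fps_expm1_quot s oo g" for s
    by (simp add: K_def g_def)
  have g_0: "g $ 0 = 0"
    by (simp add: g_def)
  have E_mult: "E s * E t = E (s + t)" for s t
    by (simp add: E_def fps_exp_compose_mult[OF g_0])
  have K_deriv: "fps_deriv (K s) = E s * fps_deriv g" for s
    by (simp add: K_g E_def fps_compose_deriv[OF g_0] fps_deriv_expm1_quot)
  have const_K: "fps_const s * K s = E s - 1" for s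
  proof -
    have "fps_const s * K s = (fps_const s * fps_expm1_quot s) oo g"
      by (simp add: K_g fps_compose_mult_distrib[OF g_0])
    then show ?thesis
      by (simp add: E_def fps_const_mult_expm1_quot fps_compose_sub_distrib)
  qed
  have "E m * fps_deriv g = E (m - a) * (fps_deriv g * E a)"
    by (simp add: E_mult mult.assoc[symmetric] mult.commute[of _ "fps_deriv g"])
  also have "\<dots> = E (m - a) * E b * (1 + fps_const b * fps_X * fps_deriv g)"
    by (simp add: E_def g_def master_inverse_deriv mult.assoc)
  also have "\<dots> =
      1 + (E (m + b - a) - 1) + fps_const b * fps_X * (E (m + b - a) * fps_deriv g)"
    by (simp add: E_mult algebra_simps)
  finally show ?thesis
    by (simp add: K_deriv const_K)
qed

theorem mainTheorem3:
  fixes a b :: complex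
  shows "master_series 1 a b = fps_exp 1 oo master_series 0 a b"
proof -
  have master_series_eq:
    "fps_expm1_quot m oo master_inverse a b = master_series m a b - fps_const m" for m
    by (rule master_series_unique)
      (simp add: fps_expm1_quot_def, rule fps_deriv_expm1_quot_compose_master_inverse)
  have "master_series 0 a b = master_inverse a b"
    using master_series_eq[of 0] by (simp add: fps_expm1_quot_0)
  moreover have "master_series 1 a b = fps_exp 1 oo master_inverse a b"
    using master_series_eq[of 1] by (simp add: fps_expm1_quot_1 fps_compose_sub_distrib)
  ultimately show ?thesis
    by simp
qed

end
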